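(* For each $n$, let $P$ be a symmetric $n\times n$ matrix with entries in $[0,1]$ and $P_{ij}=\omega\bigl(\sqrt{\log n/n}\bigr)$ for all $i\ne j$. Let $G$ be a random graph generated from $P$, let $T^*$ be an optimal HC-tree for $G$ with respect to $\rho_G$, and let $\bar T^*$ be an optimal HC-tree for the expectation graph $\bar G$. Then with high probability $|\mathrm{TC}_G(T^* )-\mathrm{TC}_{\bar G}(\bar T^* )|=o(\mathrm{TC}_{\bar G}(\bar T^* ))$.
   Context: A random graph generated from $P$ on $V=\{v_1,\dots,v_n\}$ contains each edge $(v_i,v_j)$ independently with probability $P_{ij}$, with unit weight (non-edges weight $0$). The expectation graph $\bar G$ is the complete weighted graph on $V$ with $w_{ij}=P_{ij}$. "With high probability" means with probability larger than $1-n^{-\varepsilon}$ for some constant $\varepsilon>0$. An HC-tree for $V$ is a rooted tree with leaf set $V$. For distinct $i,j,k$: $\{i,j|k\}$ holds in $T$ if $\mathrm{LCA}(v_i,v_j)$ is a proper descendant of $\mathrm{LCA}(v_i,v_j,v_k)$; $\{i|j|k\}$ holds if $\mathrm{LCA}(v_i,v_j)=\mathrm{LCA}(v_j,v_k)=\mathrm{LCA}(v_i,v_j,v_k)$. Triplet cost $c_T(i,j,k)$: $w_{ik}+w_{jk}$ if $\{i,j|k\}$; $w_{ij}+w_{jk}$ if $\{i,k|j\}$; $w_{ij}+w_{ik}$ if $\{j,k|i\}$; $w_{ij}+w_{jk}+w_{ik}$ if $\{i|j|k\}$. $\mathrm{TC}_G(T)=\sum c_T(i,j,k)$ and $\mathrm{BC}(G)=\sum\min\{w_{ij}+w_{ik},w_{ij}+w_{jk},w_{ik}+w_{jk}\}$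 over unordered triples of distinct indices; $\rho_G(T)=\mathrm{TC}_G(T)/\mathrm{BC}(G)$ (with $0/0=1$, $x/0=+\infty$ for $x>0$). Optimal means minimizing $\rho$ (equivalently $\mathrm{TC}$) over all HC-trees. *)

theory Defs
  imports "HOL-Probability.Probability"
begin

datatype hctree = Leaf nat | Node "hctree list"

primrec leaf_list :: "hctree \<Rightarrow> nat list" where
  "leaf_list (Leaf v) = [v]"
| "leaf_list (Node ts) = concat (map leaf_list ts)"

primrec subtrees :: "hctree \<Rightarrow> hctree set" where
  "subtrees (Leaf v) = {Leaf v}"
| "subtrees (Node ts) = insert (Node ts) (\<Union> (set (map subtrees ts)))"

primrec wf_tree :: "hctree \<Rightarrow> bool" where
  "wf_tree (Leaf v) = True"
| "wf_tree (Node ts) = (ts \<noteq> [] \<and> list_all id (map wf_tree ts))"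

definition leaves :: "hctree \<Rightarrow> nat set" where
  "leaves t = set (leaf_list t)"

definition is_hc_tree :: "nat \<Rightarrow> hctree \<Rightarrow> bool" where
  "is_hc_tree n T \<longleftrightarrow> wf_tree T \<and> distinct (leaf_list T) \<and> set (leaf_list T) = {..<n}"

text \<open>{i,j|k}: LCA(i,j) is a proper descendant of LCA(i,j,k), i.e. some node's
  subtree contains i and j but not k.\<close>
definition split3 :: "hctree \<Rightarrow> nat \<Rightarrow> nat \<Rightarrow> nat \<Rightarrow> bool" where
  "split3 T i j k \<longleftrightarrow> (\<exists>S\<in>subtrees T. i \<in> leaves S \<and> j \<in> leaves S \<and> k \<notin> leaves S)"

definition tcost :: "(nat \<Rightarrow> nat \<Rightarrow> real) \<Rightarrow> hctree \<Rightarrow> nat \<Rightarrow> nat \<Rightarrow> nat \<Rightarrow> real" where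
  "tcost w T i j k =
     (if split3 T i j k then w i k + w j k
      else if split3 T i k j then w i j + w j k
      else if split3 T j k i then w i j + w i k
      else w i j + w j k + w i k)"

definition triples :: "nat \<Rightarrow> (nat \<times> nat \<times> nat) set" where
  "triples n = {(i, j, k). i < j \<and> j < k \<and> k < n}"

definition TC :: "(nat \<Rightarrow> nat \<Rightarrow> real) \<Rightarrow> nat \<Rightarrow> hctree \<Rightarrow> real" where
  "TC w n T = (\<Sum>(i, j, k)\<in>triples n. tcost w T i j k)"

definition BC :: "(nat \<Rightarrow> nat \<Rightarrow> real) \<Rightarrow> nat \<Rightarrow> real" where
  "BC w n = (\<Sum>(i, j, k)\<in>triples n. min (min (w i j + w i k) (w i j + w j k)) (w i k + w j k))"

definition rho :: "(nat \<Rightarrow> nat \<Rightarrow> real) \<Rightarrow> nat \<Rightarrow> hctree \<Rightarrow> ereal" where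
  "rho w n T = (if BC w n = 0 then (if TC w n T = 0 then 1 else \<infinity>)
                else ereal (TC w n T / BC w n))"

definition optimal :: "(nat \<Rightarrow> nat \<Rightarrow> real) \<Rightarrow> nat \<Rightarrow> hctree \<Rightarrow> bool" where
  "optimal w n T \<longleftrightarrow> is_hc_tree n T \<and> (\<forall>T'. is_hc_tree n T' \<longrightarrow> rho w n T \<le> rho w n T')"

definition random_graph :: "nat \<Rightarrow> (nat \<Rightarrow> nat \<Rightarrow> real) \<Rightarrow> (nat \<times> nat \<Rightarrow> bool) pmf" where
  "random_graph n P = Pi_pmf {(i, j). i < j \<and> j < n} False (\<lambda>(i, j). bernoulli_pmf (P i j))"

definition graph_weight :: "(nat \<times> nat \<Rightarrow> bool) \<Rightarrow> nat \<Rightarrow> nat \<Rightarrow> real" where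
  "graph_weight E i j = (if E (min i j, max i j) then 1 else 0)"

end

theory Submission
  imports Defs
begin

text \<open>The triplet cost of a tree is a linear form in the edge weights whose coefficients
  lie in [0, 3n] and depend only on the cluster system of the tree. Cluster systems of
  HC-trees are sets of at most 2n intervals of the leaf order, so there are only
  e^{O(n log n)} such linear forms. Hoeffding's inequality and a union bound show that,
  with probability > 1 - 1/n, all of them deviate from their expectation by less than
  t = 12 n^2 sqrt(n log n) simultaneously; then the optimal costs of G and of the
  expectation graph also differ by less than t. The density assumption gives
  BC(P) >= c n^2 sqrt(n log n) / 108 for every c > 0 eventually, and since every tree
  costs at least BC(P), the error t is o(TC(P, T)).\<close>

definition clusters :: "hctree \<Rightarrow> nat set set" where
  "clusters T = leaves ` subtrees T"

lemma split3_iff_clusters: "split3 T i j k \<longleftrightarrow> (\<exists>C\<in>clusters T. i \<in> C \<and> j \<in> C \<and> k \<notin> C)"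
  unfolding split3_def clusters_def by auto

lemma tcost_clusters_eq: "clusters T = clusters T' \<Longrightarrow> tcost w T i j k = tcost w T' i j k"
  unfolding tcost_def split3_iff_clusters by (simp only:)

lemma self_in_subtrees: "T \<in> subtrees T"
  by (cases T) auto

lemma clusters_Node: "clusters (Node ts) = insert (leaves (Node ts)) (\<Union>t\<in>set ts. clusters t)"
  unfolding clusters_def by auto

lemma leaves_Node: "leaves (Node ts) = (\<Union>t\<in>set ts. leaves t)"
  unfolding leaves_def by auto

lemma leaf_list_subtree_infix: "S \<in> subtrees T \<Longrightarrow> \<exists>ps ss. leaf_list T = ps @ leaf_list S @ ss"
proof (induction T arbitrary: S)
  case (Leaf v)
  then show ?case by auto
next
  case (Node ts)
  show ?case
  proof (cases "S = Node ts")
    case True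
    then show ?thesis by (metis append.left_neutral append_Nil2)
  next
    case False
    with Node.prems obtain t where t: "t \<in> set ts" "S \<in> subtrees t" by auto
    from Node.IH[OF t] obtain ps ss where pss: "leaf_list t = ps @ leaf_list S @ ss" by blast
    from t(1) obtain us vs where "ts = us @ t # vs" by (meson split_list)
    then have "leaf_list (Node ts) = concat (map leaf_list us) @ leaf_list t @ concat (map leaf_list vs)"
      by simp
    with pss show ?thesis by (metis append.assoc)
  qed
qed

lemma sum_set_le_sum_list: "(\<Sum>x\<in>set xs. (f x :: nat)) \<le> sum_list (map f xs)"
proof -
  have "sum_list (map f xs) = (\<Sum>x\<in>set xs. count_list xs x * f x)"
    by (rule sum_list_map_eq_sum_count)
  also have "\<dots> \<ge> (\<Sum>x\<in>set xs. f x)"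
    by (intro sum_mono) (metis count_list_0_iff less_one mult_le_mono1 mult_1 not_le)
  finally show ?thesis .
qed

text \<open>The cluster of a node is either already the cluster of a child, or the node has at
  least two children.\<close>
lemma card_clusters_le:
  "wf_tree T \<Longrightarrow> finite (clusters T) \<and> card (clusters T) + 1 \<le> 2 * length (leaf_list T)"
proof (induction T)
  case (Leaf x)
  then show ?case by (simp add: clusters_def)
next
  case (Node ts)
  have IH: "\<And>t. t \<in> set ts \<Longrightarrow> finite (clusters t) \<and> card (clusters t) + 1 \<le> 2 * length (leaf_list t)"
    using Node by (auto simp: list_all_iff)
  define U where "U = (\<Union>t\<in>set ts. clusters t)"
  have finU: "finite U" unfolding U_def using IH by auto
  have "(\<Sum>t\<in>set ts. card (clusters t) + 1) = (\<Sum>t\<in>set ts. card (clusters t)) + card (set ts)"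
    by (simp only: sum.distrib) simp
  then have "card U + card (set ts) \<le> (\<Sum>t\<in>set ts. card (clusters t) + 1)"
    using card_UN_le[OF finite_set, of clusters ts] unfolding U_def by linarith
  also have "\<dots> \<le> (\<Sum>t\<in>set ts. 2 * length (leaf_list t))"
    by (intro sum_mono) (use IH in auto)
  also have "\<dots> \<le> sum_list (map (\<lambda>t. 2 * length (leaf_list t)) ts)"
    by (rule sum_set_le_sum_list)
  also have "\<dots> = 2 * length (leaf_list (Node ts))"
    by (simp add: length_concat sum_list_const_mult o_def)
  finally have key: "card U + card (set ts) \<le> 2 * length (leaf_list (Node ts))" .
  have children: "card (set ts) \<ge> 1" using Node.prems by (simp add: Suc_le_eq card_gt_0_iff)
  show ?case
  proof (cases "leaves (Node ts) \<in> U")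
    case True
    then have "clusters (Node ts) = U" unfolding clusters_Node U_def[symmetric] by (rule insert_absorb)
    with key children finU show ?thesis by (simp only: simp_thms)
  next
    case False
    have "card (set ts) \<ge> 2"
    proof (rule ccontr)
      assume "\<not> card (set ts) \<ge> 2"
      with children have "card (set ts) = 1" by linarith
      then obtain t where "set ts = {t}" by (rule card_1_singletonE)
      then have "leaves (Node ts) \<in> U"
        unfolding U_def clusters_def leaves_Node using self_in_subtrees by auto
      with False show False ..
    qed
    moreover have "card (clusters (Node ts)) \<le> card U + 1"
      unfolding clusters_Node U_def[symmetric] using finU by (simp add: card_insert_if)
    ultimately show ?thesis using key finU by (simp add: clusters_Node U_def[symmetric])
  qed
qed

definition segment :: "nat list \<Rightarrow> nat \<times> nat \<Rightarrow> nat set" where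
  "segment xs p = set (take (snd p) (drop (fst p) xs))"

lemma length_leaf_list_hc_tree: "is_hc_tree n T \<Longrightarrow> length (leaf_list T) = n"
  unfolding is_hc_tree_def by (metis card_lessThan distinct_card)

lemma clusters_subset_segments:
  assumes "is_hc_tree n T"
  shows "clusters T \<subseteq> segment (leaf_list T) ` ({..n} \<times> {..n})"
proof
  fix C assume "C \<in> clusters T"
  then obtain S where S: "S \<in> subtrees T" "C = leaves S" unfolding clusters_def by auto
  from leaf_list_subtree_infix[OF S(1)] obtain ps ss where e: "leaf_list T = ps @ leaf_list S @ ss"
    by blast
  have "C = segment (leaf_list T) (length ps, length (leaf_list S))"
    unfolding segment_def S(2) leaves_def e by simp
  moreover have "(length ps, length (leaf_list S)) \<in> {..n} \<times> {..n}"
    using length_leaf_list_hc_tree[OF assms] e by auto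
  ultimately show "C \<in> segment (leaf_list T) ` ({..n} \<times> {..n})" by blast
qed

lemma ex_list_set_eq_length:
  assumes "finite R" "R \<noteq> {}" "card R \<le> m"
  shows "\<exists>L. set L = R \<and> length L = m"
proof -
  obtain xs where xs: "set xs = R" "distinct xs" using finite_distinct_list[OF assms(1)] by blast
  have "length xs = card R" using xs distinct_card by fastforce
  moreover have "xs \<noteq> []" using xs assms(2) by auto
  ultimately show ?thesis using xs assms(3)
    by (intro exI[of _ "xs @ replicate (m - card R) (hd xs)"]) auto
qed

text \<open>A cluster system is coded by the leaf order together with a list of 2n index pairs
  (padded by repetition) whose segments are the clusters.\<close>
lemma hc_tree_clusters_code:
  assumes T: "is_hc_tree n T"
  obtains L where "set L \<subseteq> {..n} \<times> {..n}" "length L = 2 * n"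
    "clusters T = segment (leaf_list T) ` set L"
proof -
  have fin: "finite (clusters T)" and card: "card (clusters T) + 1 \<le> 2 * n"
    using card_clusters_le length_leaf_list_hc_tree[OF T] T by (auto simp: is_hc_tree_def)
  obtain R where R: "R \<subseteq> {..n} \<times> {..n}" "inj_on (segment (leaf_list T)) R"
    "clusters T = segment (leaf_list T) ` R"
    using clusters_subset_segments[OF T] unfolding subset_image_inj by blast
  have "leaves T \<in> clusters T" unfolding clusters_def using self_in_subtrees by auto
  then have "R \<noteq> {}" "finite R" "card R \<le> 2 * n"
    using R fin card card_image[OF R(2)] finite_image_iff[OF R(2)] by auto
  then obtain L where "set L = R" "length L = 2 * n"
    using ex_list_set_eq_length by blast
  with R that show ?thesis by blast
qed

lemma card_cluster_systems_le:
  "finite (clusters ` {T. is_hc_tree n T}) \<and>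
   card (clusters ` {T. is_hc_tree n T}) \<le> n ^ n * ((n + 1)\<^sup>2) ^ (2 * n)"
proof -
  define XS where "XS = {xs. set xs \<subseteq> {..<n} \<and> length xs = n}"
  define LS where "LS = {L. set L \<subseteq> {..n} \<times> {..n} \<and> length L = 2 * n}"
  define code where "code = (\<lambda>(xs, L). segment xs ` set L)"
  have coding: "clusters ` {T. is_hc_tree n T} \<subseteq> code ` (XS \<times> LS)"
  proof clarify
    fix T assume T: "is_hc_tree n T"
    obtain L where L: "set L \<subseteq> {..n} \<times> {..n}" "length L = 2 * n"
      "clusters T = segment (leaf_list T) ` set L"
      using hc_tree_clusters_code[OF T] .
    have "leaf_list T \<in> XS" unfolding XS_def
      using T length_leaf_list_hc_tree[OF T] unfolding is_hc_tree_def by auto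
    moreover have "L \<in> LS" unfolding LS_def using L by auto
    moreover have "clusters T = code (leaf_list T, L)" unfolding code_def using L by simp
    ultimately show "clusters T \<in> code ` (XS \<times> LS)" by blast
  qed
  have XS: "finite XS" "card XS = n ^ n"
    unfolding XS_def by (simp_all add: finite_lists_length_eq card_lists_length_eq)
  have LS: "finite LS" "card LS = ((n + 1)\<^sup>2) ^ (2 * n)"
    unfolding LS_def
    by (simp_all add: finite_lists_length_eq card_lists_length_eq card_cartesian_product power2_eq_square)
  have fin: "finite (code ` (XS \<times> LS))"
    using XS LS by blast
  have "card (clusters ` {T. is_hc_tree n T}) \<le> card (code ` (XS \<times> LS))"
    by (rule card_mono[OF fin coding])
  also have "\<dots> \<le> card (XS \<times> LS)"
    by (rule card_image_le) (use XS LS in blast)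
  also have "\<dots> = n ^ n * ((n + 1)\<^sup>2) ^ (2 * n)"
    by (simp only: card_cartesian_product XS LS)
  finally have "card (clusters ` {T. is_hc_tree n T}) \<le> n ^ n * ((n + 1)\<^sup>2) ^ (2 * n)" .
  with finite_subset[OF coding fin] show ?thesis ..
qed

definition vertex_pairs :: "nat \<Rightarrow> (nat \<times> nat) set" where
  "vertex_pairs n = {(i, j). i < j \<and> j < n}"

definition pair_weight :: "nat \<times> nat \<Rightarrow> nat \<Rightarrow> nat \<Rightarrow> real" where
  "pair_weight e i j = of_bool ((i, j) = e)"

definition tc_coeff :: "nat \<Rightarrow> hctree \<Rightarrow> nat \<times> nat \<Rightarrow> real" where
  "tc_coeff n T e = TC (pair_weight e) n T"

lemma finite_vertex_pairs: "finite (vertex_pairs n)"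
  by (rule finite_subset[of _ "{..<n} \<times> {..<n}"]) (auto simp: vertex_pairs_def)

lemma finite_triples: "finite (triples n)"
  by (rule finite_subset[of _ "{..<n} \<times> {..<n} \<times> {..<n}"]) (auto simp: triples_def)

lemma tcost_cong_weights:
  assumes "w i j = w' i j" "w i k = w' i k" "w j k = w' j k"
  shows "tcost w T i j k = tcost w' T i j k"
  using assms by (simp add: tcost_def)

lemma tcost_sum_weights:
  "tcost (\<lambda>x y. \<Sum>e\<in>S. c e * g e x y) T i j k = (\<Sum>e\<in>S. c e * tcost (g e) T i j k)"
  unfolding tcost_def
  by (cases "split3 T i j k"; cases "split3 T i k j"; cases "split3 T j k i")
     (simp_all add: sum.distrib distrib_left)

lemma sum_pair_weight:
  assumes "(i, j) \<in> vertex_pairs n"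
  shows "(\<Sum>e\<in>vertex_pairs n. w (fst e) (snd e) * pair_weight e i j) = w i j"
proof -
  have "(\<Sum>e\<in>vertex_pairs n. w (fst e) (snd e) * pair_weight e i j)
      = (\<Sum>e\<in>vertex_pairs n. if e = (i, j) then w i j else 0)"
    by (intro sum.cong) (auto simp: pair_weight_def)
  also have "\<dots> = w i j" using assms finite_vertex_pairs by simp
  finally show ?thesis .
qed

lemma TC_eq_sum_tc_coeff: "TC w n T = (\<Sum>e\<in>vertex_pairs n. w (fst e) (snd e) * tc_coeff n T e)"
proof -
  have "TC w n T = (\<Sum>(i, j, k)\<in>triples n.
          \<Sum>e\<in>vertex_pairs n. w (fst e) (snd e) * tcost (pair_weight e) T i j k)"
    unfolding TC_def
  proof (intro sum.cong refl, clarify)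
    fix i j k assume "(i, j, k) \<in> triples n"
    then have "(i, j) \<in> vertex_pairs n" "(i, k) \<in> vertex_pairs n" "(j, k) \<in> vertex_pairs n"
      by (auto simp: vertex_pairs_def triples_def)
    then have "tcost w T i j k
        = tcost (\<lambda>x y. \<Sum>e\<in>vertex_pairs n. w (fst e) (snd e) * pair_weight e x y) T i j k"
      by (intro tcost_cong_weights) (simp_all add: sum_pair_weight)
    then show "tcost w T i j k
        = (\<Sum>e\<in>vertex_pairs n. w (fst e) (snd e) * tcost (pair_weight e) T i j k)"
      by (simp only: tcost_sum_weights)
  qed
  also have "\<dots> = (\<Sum>e\<in>vertex_pairs n. \<Sum>(i, j, k)\<in>triples n.
                     w (fst e) (snd e) * tcost (pair_weight e) T i j k)"
    by (subst sum.swap) (simp add: case_prod_unfold)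
  also have "\<dots> = (\<Sum>e\<in>vertex_pairs n. w (fst e) (snd e) * tc_coeff n T e)"
    unfolding tc_coeff_def TC_def by (simp add: sum_distrib_left case_prod_unfold)
  finally show ?thesis .
qed

lemma tc_coeff_clusters_eq: "clusters T = clusters T' \<Longrightarrow> tc_coeff n T = tc_coeff n T'"
  unfolding tc_coeff_def TC_def by (simp add: tcost_clusters_eq[of T T'] case_prod_unfold)

lemma card_tc_coeffs_le:
  "finite (tc_coeff n ` {T. is_hc_tree n T}) \<and>
   card (tc_coeff n ` {T. is_hc_tree n T}) \<le> n ^ n * ((n + 1)\<^sup>2) ^ (2 * n)"
proof -
  define H where "H = {T. is_hc_tree n T}"
  define rep where "rep C = (SOME T. T \<in> H \<and> clusters T = C)" for C
  define g where "g C = tc_coeff n (rep C)" for C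
  have sub: "tc_coeff n ` H \<subseteq> g ` clusters ` H"
  proof clarify
    fix T assume T: "T \<in> H"
    then have "clusters (rep (clusters T)) = clusters T"
      unfolding rep_def using someI[of "\<lambda>T'. T' \<in> H \<and> clusters T' = clusters T"] by blast
    then have "tc_coeff n T = g (clusters T)" unfolding g_def by (metis tc_coeff_clusters_eq)
    with T show "tc_coeff n T \<in> g ` clusters ` H" by blast
  qed
  have fin: "finite (clusters ` H)" and card: "card (clusters ` H) \<le> n ^ n * ((n + 1)\<^sup>2) ^ (2 * n)"
    using card_cluster_systems_le[of n] unfolding H_def by auto
  have "card (tc_coeff n ` H) \<le> card (g ` clusters ` H)"
    using sub fin by (intro card_mono) auto
  also have "\<dots> \<le> card (clusters ` H)"
    by (rule card_image_le[OF fin])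
  finally have "card (tc_coeff n ` H) \<le> n ^ n * ((n + 1)\<^sup>2) ^ (2 * n)"
    using card by linarith
  with finite_subset[OF sub finite_imageI[OF fin]] show ?thesis
    unfolding H_def ..
qed

lemma tcost_nonneg:
  assumes "w i j \<ge> 0" "w i k \<ge> 0" "w j k \<ge> 0"
  shows "tcost w T i j k \<ge> 0"
  using assms by (simp add: tcost_def)

lemma tcost_le_sum_weights:
  assumes "w i j \<ge> 0" "w i k \<ge> 0" "w j k \<ge> 0"
  shows "tcost w T i j k \<le> w i j + w i k + w j k"
  using assms by (simp add: tcost_def)

lemma min_le_tcost:
  assumes "w i j \<ge> 0" "w i k \<ge> 0" "w j k \<ge> 0"
  shows "min (min (w i j + w i k) (w i j + w j k)) (w i k + w j k) \<le> tcost w T i j k"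
  using assms by (simp add: tcost_def min_le_iff_disj)

lemma tc_coeff_nonneg: "tc_coeff n T e \<ge> 0"
  unfolding tc_coeff_def TC_def
  by (intro sum_nonneg) (auto intro!: tcost_nonneg simp: pair_weight_def)

lemma sum_triples_of_bool_le:
  assumes "\<And>t. t \<in> triples n \<Longrightarrow> P t \<Longrightarrow> t \<in> h ` {..<n}"
  shows "(\<Sum>t\<in>triples n. of_bool (P t) :: real) \<le> n"
proof -
  have "(\<Sum>t\<in>triples n. of_bool (P t) :: real) = real (card {t \<in> triples n. P t})"
    by (simp add: of_bool_def sum.If_cases finite_triples Int_def)
  also have "card {t \<in> triples n. P t} \<le> card (h ` {..<n})"
    using assms by (intro card_mono) auto
  also have "\<dots> \<le> n" using card_image_le[of "{..<n}" h] by simp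
  finally show ?thesis by simp
qed

text \<open>A pair lies in at most n triples in each of its three possible positions.\<close>
lemma tc_coeff_le: "tc_coeff n T e \<le> 3 * real n"
proof -
  obtain a b where e: "e = (a, b)" by fastforce
  have "tc_coeff n T e \<le> (\<Sum>(i, j, k)\<in>triples n.
          pair_weight e i j + pair_weight e i k + pair_weight e j k)"
    unfolding tc_coeff_def TC_def
    by (intro sum_mono, clarify, rule tcost_le_sum_weights; simp add: pair_weight_def)
  also have "\<dots> = (\<Sum>t\<in>triples n. of_bool ((fst t, fst (snd t)) = e))
      + (\<Sum>t\<in>triples n. of_bool ((fst t, snd (snd t)) = e))
      + (\<Sum>t\<in>triples n. of_bool ((fst (snd t), snd (snd t)) = e))"
    by (simp add: pair_weight_def sum.distrib case_prod_unfold)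
  also have "\<dots> \<le> real n + real n + real n"
    by (intro add_mono sum_triples_of_bool_le[where h = "\<lambda>k. (a, b, k)"]
        sum_triples_of_bool_le[where h = "\<lambda>k. (a, k, b)"]
        sum_triples_of_bool_le[where h = "\<lambda>k. (k, a, b)"])
       (force simp: e triples_def)+
  finally show ?thesis by simp
qed

lemma BC_le_TC:
  assumes "\<And>i j. i < j \<Longrightarrow> j < n \<Longrightarrow> w i j \<ge> 0"
  shows "BC w n \<le> TC w n T"
  unfolding BC_def TC_def
  by (intro sum_mono) (auto intro!: min_le_tcost assms simp: triples_def)

lemma BC_nonneg:
  assumes "\<And>i j. i < j \<Longrightarrow> j < n \<Longrightarrow> w i j \<ge> 0"
  shows "BC w n \<ge> 0"
  unfolding BC_def
  by (intro sum_nonneg) (auto intro!: add_nonneg_nonneg assms simp: triples_def)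

lemma rho_le_iff_TC_le: "BC w n > 0 \<Longrightarrow> rho w n T \<le> rho w n T' \<longleftrightarrow> TC w n T \<le> TC w n T'"
  unfolding rho_def by (simp add: divide_right_mono divide_le_cancel)

lemma random_graph_eq_Pi_pmf:
  "random_graph n Pn = Pi_pmf (vertex_pairs n) False (\<lambda>e. bernoulli_pmf (Pn (fst e) (snd e)))"
  unfolding random_graph_def vertex_pairs_def by (simp add: case_prod_unfold)

lemma expectation_random_graph_edge:
  assumes "e \<in> vertex_pairs n" "0 \<le> Pn (fst e) (snd e)" "Pn (fst e) (snd e) \<le> 1"
  shows "measure_pmf.expectation (random_graph n Pn) (\<lambda>X. c * of_bool (X e)) = c * Pn (fst e) (snd e)"
proof -
  have "measure_pmf.expectation (random_graph n Pn) (\<lambda>X. c * of_bool (X e))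
      = measure_pmf.expectation (map_pmf (\<lambda>X. X e) (random_graph n Pn)) (\<lambda>b. c * of_bool b)"
    by simp
  also have "map_pmf (\<lambda>X. X e) (random_graph n Pn) = bernoulli_pmf (Pn (fst e) (snd e))"
    unfolding random_graph_eq_Pi_pmf using assms(1)
    by (subst Pi_pmf_component) (auto simp: finite_vertex_pairs)
  also have "measure_pmf.expectation \<dots> (\<lambda>b. c * of_bool b) = c * Pn (fst e) (snd e)"
    using assms(2,3) by simp
  finally show ?thesis .
qed

lemma prob_random_graph_deviation_le_sum_squares:
  fixes Pn :: "nat \<Rightarrow> nat \<Rightarrow> real" and a :: "nat \<times> nat \<Rightarrow> real"
  assumes a: "\<And>e. e \<in> vertex_pairs n \<Longrightarrow> 0 \<le> a e"
    and p: "\<And>e. e \<in> vertex_pairs n \<Longrightarrow> 0 \<le> Pn (fst e) (snd e) \<and> Pn (fst e) (snd e) \<le> 1"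
    and t: "t \<ge> 0" and spread: "(\<Sum>e\<in>vertex_pairs n. (a e)\<^sup>2) > 0"
  shows "measure_pmf.prob (random_graph n Pn)
           {X. t \<le> \<bar>\<Sum>e\<in>vertex_pairs n. a e * (of_bool (X e) - Pn (fst e) (snd e))\<bar>}
         \<le> 2 * exp (- 2 * t\<^sup>2 / (\<Sum>e\<in>vertex_pairs n. (a e)\<^sup>2))"
proof -
  define Y where "Y = (\<lambda>e X. a e * of_bool (X e))"
  define \<mu> where "\<mu> = (\<Sum>e\<in>vertex_pairs n. measure_pmf.expectation (random_graph n Pn) (Y e))"
  have \<mu>: "\<mu> = (\<Sum>e\<in>vertex_pairs n. a e * Pn (fst e) (snd e))"
    unfolding \<mu>_def Y_def using p by (intro sum.cong refl expectation_random_graph_edge) auto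
  have centred: "(\<Sum>e\<in>vertex_pairs n. a e * (of_bool (X e) - Pn (fst e) (snd e)))
      = (\<Sum>e\<in>vertex_pairs n. Y e X) - \<mu>" for X
    unfolding \<mu> Y_def by (simp add: sum_subtractf right_diff_distrib)
  interpret Hoeffding_ineq "measure_pmf (random_graph n Pn)" "vertex_pairs n" Y "\<lambda>_. 0" a \<mu>
  proof unfold_locales
    show "finite (vertex_pairs n)" by (rule finite_vertex_pairs)
    show "prob_space.indep_vars (measure_pmf (random_graph n Pn)) (\<lambda>_. borel) Y (vertex_pairs n)"
      unfolding random_graph_eq_Pi_pmf Y_def
      by (intro prob_space.indep_vars_compose2[OF _ indep_vars_Pi_pmf[OF finite_vertex_pairs]])
         (auto simp: measure_pmf.prob_space_axioms)
    show "AE x in measure_pmf (random_graph n Pn). Y e x \<in> {0..a e}" if "e \<in> vertex_pairs n" for e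
      using a[OF that] by (intro AE_I2) (auto simp: Y_def)
  qed (simp add: \<mu>_def)
  show ?thesis
    using Hoeffding_ineq_abs_ge[of t] t spread by (simp add: centred)
qed

lemma prob_random_graph_deviation_le:
  fixes Pn :: "nat \<Rightarrow> nat \<Rightarrow> real" and a :: "nat \<times> nat \<Rightarrow> real"
  assumes a: "\<And>e. e \<in> vertex_pairs n \<Longrightarrow> 0 \<le> a e \<and> a e \<le> A"
    and p: "\<And>e. e \<in> vertex_pairs n \<Longrightarrow> 0 \<le> Pn (fst e) (snd e) \<and> Pn (fst e) (snd e) \<le> 1"
    and t: "t > 0"
  shows "measure_pmf.prob (random_graph n Pn)
           {X. t \<le> \<bar>\<Sum>e\<in>vertex_pairs n. a e * (of_bool (X e) - Pn (fst e) (snd e))\<bar>}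
         \<le> 2 * exp (- 2 * t\<^sup>2 / (real (card (vertex_pairs n)) * A\<^sup>2))"
proof (cases "\<forall>e\<in>vertex_pairs n. a e = 0")
  case True
  then show ?thesis using t by simp
next
  case False
  then obtain e0 where e0: "e0 \<in> vertex_pairs n" "a e0 \<noteq> 0" by blast
  have spread: "(\<Sum>e\<in>vertex_pairs n. (a e)\<^sup>2) > 0"
    using e0 by (intro sum_pos2[OF finite_vertex_pairs e0(1)]) auto
  have "measure_pmf.prob (random_graph n Pn)
          {X. t \<le> \<bar>\<Sum>e\<in>vertex_pairs n. a e * (of_bool (X e) - Pn (fst e) (snd e))\<bar>}
      \<le> 2 * exp (- 2 * t\<^sup>2 / (\<Sum>e\<in>vertex_pairs n. (a e)\<^sup>2))"
    by (rule prob_random_graph_deviation_le_sum_squares) (use a p t spread in auto)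
  also have "\<dots> \<le> 2 * exp (- 2 * t\<^sup>2 / (real (card (vertex_pairs n)) * A\<^sup>2))"
  proof -
    have "(\<Sum>e\<in>vertex_pairs n. (a e)\<^sup>2) \<le> (\<Sum>e\<in>vertex_pairs n. A\<^sup>2)"
      using a by (intro sum_mono) (auto intro: power_mono)
    then show ?thesis using spread t by (simp add: frac_le)
  qed
  finally show ?thesis .
qed

lemma graph_weight_vertex_pair:
  "e \<in> vertex_pairs n \<Longrightarrow> graph_weight X (fst e) (snd e) = of_bool (X e)"
  by (cases e) (auto simp: vertex_pairs_def graph_weight_def)

lemma TC_graph_weight: "TC (graph_weight X) n T = (\<Sum>e\<in>vertex_pairs n. of_bool (X e) * tc_coeff n T e)"
  unfolding TC_eq_sum_tc_coeff[of "graph_weight X"] by (intro sum.cong refl) (simp add: graph_weight_vertex_pair)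

lemma TC_graph_weight_minus_TC:
  "TC (graph_weight X) n T - TC Pn n T
     = (\<Sum>e\<in>vertex_pairs n. tc_coeff n T e * (of_bool (X e) - Pn (fst e) (snd e)))"
  unfolding TC_graph_weight TC_eq_sum_tc_coeff[of Pn] sum_subtractf[symmetric]
  by (intro sum.cong refl) (simp add: algebra_simps)

text \<open>If BC(G) = 0, no triple carries two edges, so the edges form a matching and are
  determined by their smaller endpoint.\<close>
lemma inj_on_fst_edges_if_BC_eq_0:
  assumes BC0: "BC (graph_weight X) n = 0"
  shows "inj_on fst {e \<in> vertex_pairs n. X e}"
proof (rule inj_onI, rule ccontr)
  let ?w = "graph_weight X"
  fix e e' assume e: "e \<in> {e \<in> vertex_pairs n. X e}" and e': "e' \<in> {e \<in> vertex_pairs n. X e}"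
    and fst_eq: "fst e = fst e'" and "e \<noteq> e'"
  obtain i j where e_ij: "e = (i, j)" by fastforce
  with fst_eq obtain j' where e'_ij': "e' = (i, j')" by (metis fst_conv prod.collapse)
  have edges: "i < j" "j < n" "X (i, j)" "i < j'" "j' < n" "X (i, j')"
    using e e' by (auto simp: e_ij e'_ij' vertex_pairs_def)
  have "j \<noteq> j'" using \<open>e \<noteq> e'\<close> e_ij e'_ij' by simp
  then have "\<exists>j k. i < j \<and> j < k \<and> k < n \<and> X (i, j) \<and> X (i, k)"
    using edges by (cases "j < j'") (auto simp: not_less_iff_gr_or_eq)
  then obtain j k where jk: "i < j" "j < k" "k < n" "X (i, j)" "X (i, k)" by blast
  let ?f = "\<lambda>(i, j, k). min (min (?w i j + ?w i k) (?w i j + ?w j k)) (?w i k + ?w j k)"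
  have "?f (i, j, k) = 0"
  proof (rule sum_nonneg_0[OF finite_triples])
    show "(\<Sum>t\<in>triples n. ?f t) = 0" using BC0 unfolding BC_def .
    show "(i, j, k) \<in> triples n" using jk by (simp add: triples_def)
  qed (auto simp: graph_weight_def)
  moreover have "?w i j = 1" "?w i k = 1" using jk by (auto simp: graph_weight_def)
  ultimately show False by (simp add: graph_weight_def split: if_splits)
qed

lemma TC_le_if_BC_graph_weight_eq_0:
  assumes BC0: "BC (graph_weight X) n = 0"
  shows "TC (graph_weight X) n T \<le> 3 * real n * real n"
proof -
  define Ed where "Ed = {e \<in> vertex_pairs n. X e}"
  have "card Ed = card (fst ` Ed)"
    using inj_on_fst_edges_if_BC_eq_0[OF BC0] unfolding Ed_def by (simp add: card_image)
  also have "\<dots> \<le> card {..<n}"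
    by (intro card_mono) (auto simp: Ed_def vertex_pairs_def)
  finally have card_Ed: "card Ed \<le> n" by simp
  have "TC (graph_weight X) n T = (\<Sum>e\<in>Ed. tc_coeff n T e)"
    unfolding TC_graph_weight Ed_def
    by (auto simp: sum.inter_filter[OF finite_vertex_pairs] intro!: sum.cong)
  also have "\<dots> \<le> (\<Sum>e\<in>Ed. 3 * real n)"
    by (intro sum_mono tc_coeff_le)
  also have "\<dots> \<le> 3 * real n * real n"
    using card_Ed by (simp add: mult_right_mono)
  finally show ?thesis .
qed

lemma card_triples_ge: "(n div 3) ^ 3 \<le> card (triples n)"
proof -
  define m where "m = n div 3"
  define g :: "nat \<times> nat \<times> nat \<Rightarrow> nat \<times> nat \<times> nat"
    where "g = (\<lambda>(i, j, k). (i, m + j, 2 * m + k))"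
  have "inj_on g ({..<m} \<times> {..<m} \<times> {..<m})" unfolding g_def by (auto simp: inj_on_def)
  moreover have "g ` ({..<m} \<times> {..<m} \<times> {..<m}) \<subseteq> triples n"
    unfolding g_def triples_def m_def by auto
  ultimately have "card ({..<m} \<times> {..<m} \<times> {..<m}) \<le> card (triples n)"
    using finite_triples by (intro card_inj_on_le) auto
  then show ?thesis unfolding m_def by (simp add: card_cartesian_product power3_eq_cube)
qed

lemma BC_ge_if_weights_ge:
  assumes "\<And>i j. i < j \<Longrightarrow> j < n \<Longrightarrow> s \<le> w i j"
  shows "2 * s * real (card (triples n)) \<le> BC w n"
proof -
  have "(\<Sum>t\<in>triples n. 2 * s) \<le> BC w n"
    unfolding BC_def
  proof (intro sum_mono, clarify)
    fix i j k assume "(i, j, k) \<in> triples n"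
    then have "s \<le> w i j" "s \<le> w i k" "s \<le> w j k" using assms by (auto simp: triples_def)
    then show "2 * s \<le> min (min (w i j + w i k) (w i j + w j k)) (w i k + w j k)" by simp
  qed
  then show ?thesis by (simp add: mult.commute)
qed

text \<open>The deviation allowed for each tree: Hoeffding's exponent 2 t^2 / (n^2 (3n)^2) must
  beat the log of the number of cluster systems, which is O(n log n).\<close>
definition dev_scale :: "nat \<Rightarrow> real" where
  "dev_scale n = 12 * real n ^ 2 * sqrt (real n * ln (real n))"

lemma ln_ge_1: "n \<ge> 3 \<Longrightarrow> 1 \<le> ln (real n)"
  using exp_le by (subst ln_ge_iff) auto

lemma dev_scale_ge: "n \<ge> 3 \<Longrightarrow> 12 * real n ^ 2 \<le> dev_scale n"
proof -
  assume n: "n \<ge> 3"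
  have "1 * 1 \<le> real n * ln (real n)"
    by (rule mult_mono) (use n ln_ge_1[OF n] in auto)
  then show ?thesis unfolding dev_scale_def by (simp add: mult_le_cancel_left1)
qed

lemma dev_scale_pos: "n \<ge> 3 \<Longrightarrow> 0 < dev_scale n"
  by (rule less_le_trans[OF _ dev_scale_ge]) auto

lemma dense_BC_ge:
  assumes n: "n \<ge> 4" and c: "c \<ge> 0"
    and dense: "\<And>i j. i < j \<Longrightarrow> j < n \<Longrightarrow> c * sqrt (ln (real n) / real n) \<le> w i j"
  shows "c * dev_scale n / 1296 \<le> BC w n"
proof -
  have "n \<le> 6 * (n div 3)" using n by presburger
  then have "real n \<le> 6 * real (n div 3)" by (metis of_nat_le_iff of_nat_mult of_nat_numeral)
  then have "(real n / 6) ^ 3 \<le> real (n div 3) ^ 3" by (intro power_mono) auto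
  also have "\<dots> \<le> real (card (triples n))"
    using card_triples_ge[of n] by (simp only: of_nat_power[symmetric] of_nat_le_iff)
  finally have triples: "(real n / 6) ^ 3 \<le> real (card (triples n))" .
  define s where "s = c * sqrt (ln (real n) / real n)"
  have "0 \<le> s" unfolding s_def using c n by simp
  with triples have "2 * s * (real n / 6) ^ 3 \<le> 2 * s * real (card (triples n))"
    by (intro mult_left_mono) auto
  also have "\<dots> \<le> BC w n"
    using dense unfolding s_def by (rule BC_ge_if_weights_ge)
  finally have "2 * (c * sqrt (ln (real n) / real n)) * (real n / 6) ^ 3 \<le> BC w n"
    unfolding s_def .
  moreover have "real n * ln (real n) = (real n)\<^sup>2 * (ln (real n) / real n)"
    using n by (simp add: power2_eq_square)
  then have "sqrt (real n * ln (real n)) = real n * sqrt (ln (real n) / real n)"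
    by (simp only: real_sqrt_mult real_sqrt_abs abs_of_nat)
  ultimately show ?thesis
    unfolding dev_scale_def by (simp add: power3_eq_cube power2_eq_square field_simps)
qed

lemma cluster_bound_le_exp:
  assumes n: "n \<ge> 4"
  shows "real (n ^ n * ((n + 1)\<^sup>2) ^ (2 * n)) \<le> exp (9 * real n * ln (real n))"
proof -
  have "4 * n \<le> n * n" using n by (rule mult_le_mono1)
  with n have "n + 1 \<le> n\<^sup>2" unfolding power2_eq_square by linarith
  then have "n ^ n * ((n + 1)\<^sup>2) ^ (2 * n) \<le> n ^ n * ((n\<^sup>2)\<^sup>2) ^ (2 * n)"
    by (intro mult_le_mono2 power_mono) auto
  also have "\<dots> = n ^ (9 * n)"
    by (simp flip: power_mult power_add)
  finally have "real (n ^ n * ((n + 1)\<^sup>2) ^ (2 * n)) \<le> real n ^ (9 * n)"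
    by (metis of_nat_le_iff of_nat_power)
  also have "\<dots> = exp (9 * real n * ln (real n))"
    using n by (subst exp_of_nat_mult[of "9 * n", simplified]) simp
  finally show ?thesis .
qed

lemma hoeffding_exponent_ge:
  assumes n: "n \<ge> 3" and m: "0 < m" "m \<le> (real n)\<^sup>2"
  shows "32 * real n * ln (real n) \<le> 2 * (dev_scale n)\<^sup>2 / (m * (3 * real n)\<^sup>2)"
proof -
  have L: "0 \<le> ln (real n)" using ln_ge_1[OF n] by simp
  have "(dev_scale n)\<^sup>2 = 144 * real n ^ 5 * ln (real n)"
    unfolding dev_scale_def using L
    by (simp add: power_mult_distrib real_sqrt_pow2 flip: power_mult) (simp add: power_eq_if)
  then have "32 * real n * ln (real n) = 2 * (dev_scale n)\<^sup>2 / ((real n)\<^sup>2 * (3 * real n)\<^sup>2)"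
    using n by (simp add: field_simps power2_eq_square eval_nat_numeral)
  also have "\<dots> \<le> 2 * (dev_scale n)\<^sup>2 / (m * (3 * real n)\<^sup>2)"
    using m n by (intro divide_left_mono mult_right_mono mult_pos_pos) auto
  finally show ?thesis .
qed

lemma cluster_bound_times_tail_lt:
  assumes n: "n \<ge> 4" and m: "0 < m" "m \<le> (real n)\<^sup>2"
  shows "real (n ^ n * ((n + 1)\<^sup>2) ^ (2 * n)) * (2 * exp (- 2 * (dev_scale n)\<^sup>2 / (m * (3 * real n)\<^sup>2)))
    < 1 / real n"
proof -
  define L where "L = ln (real n)"
  have L: "1 \<le> L" unfolding L_def using ln_ge_1 n by simp
  have "exp (- 2 * (dev_scale n)\<^sup>2 / (m * (3 * real n)\<^sup>2)) \<le> exp (- (32 * real n * L))"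
    using hoeffding_exponent_ge[OF _ m] n unfolding L_def by simp
  then have "real (n ^ n * ((n + 1)\<^sup>2) ^ (2 * n)) * (2 * exp (- 2 * (dev_scale n)\<^sup>2 / (m * (3 * real n)\<^sup>2)))
      \<le> exp (9 * real n * L) * (2 * exp (- (32 * real n * L)))"
    by (intro mult_mono[OF cluster_bound_le_exp[OF n, folded L_def]]) simp_all
  also have "\<dots> = 2 * exp (- (23 * real n * L))"
  proof -
    have "exp (9 * real n * L) * exp (- (32 * real n * L)) = exp (- (23 * real n * L))"
      unfolding mult_exp_exp by (simp add: algebra_simps)
    then show ?thesis by simp
  qed
  also have "\<dots> < exp (- L)"
  proof -
    have "4 * L \<le> real n * L" using n L by (intro mult_right_mono) auto
    then have "1 < 23 * real n * L - L" using L by linarith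
    then have "2 < exp (23 * real n * L - L)" using exp_ge_add_one_self[of "23 * real n * L - L"] by linarith
    then have "2 * exp (- (23 * real n * L)) < exp (23 * real n * L - L) * exp (- (23 * real n * L))"
      by simp
    also have "\<dots> = exp (- L)"
      unfolding mult_exp_exp by simp
    finally show ?thesis .
  qed
  also have "exp (- L) = 1 / real n"
    using n unfolding L_def by (simp add: exp_minus inverse_eq_divide)
  finally show ?thesis .
qed

lemma card_vertex_pairs_le: "card (vertex_pairs n) \<le> n\<^sup>2"
proof -
  have "card (vertex_pairs n) \<le> card ({..<n} \<times> {..<n})"
    by (intro card_mono) (auto simp: vertex_pairs_def)
  then show ?thesis by (simp add: card_cartesian_product power2_eq_square)
qed

text \<open>The union bound runs over the finitely many linear forms TC(-, T), one for each
  cluster system.\<close>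
lemma prob_some_tree_deviates_lt:
  fixes Pn :: "nat \<Rightarrow> nat \<Rightarrow> real"
  assumes n: "n \<ge> 4"
    and range: "\<And>i j. i < n \<Longrightarrow> j < n \<Longrightarrow> 0 \<le> Pn i j \<and> Pn i j \<le> 1"
  shows "measure_pmf.prob (random_graph n Pn)
           {X. \<exists>T. is_hc_tree n T \<and> dev_scale n \<le> \<bar>TC (graph_weight X) n T - TC Pn n T\<bar>}
         < 1 / real n"
proof -
  define A where "A = tc_coeff n ` {T. is_hc_tree n T}"
  define bad where "bad a = {X. dev_scale n \<le> \<bar>\<Sum>e\<in>vertex_pairs n. a e * (of_bool (X e) - Pn (fst e) (snd e))\<bar>}"
    for a
  define K where "K = 2 * exp (- 2 * (dev_scale n)\<^sup>2 / (real (card (vertex_pairs n)) * (3 * real n)\<^sup>2))"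
  have count: "finite A" "card A \<le> n ^ n * ((n + 1)\<^sup>2) ^ (2 * n)"
    using card_tc_coeffs_le unfolding A_def by auto
  have "{X. \<exists>T. is_hc_tree n T \<and> dev_scale n \<le> \<bar>TC (graph_weight X) n T - TC Pn n T\<bar>} \<subseteq> (\<Union>a\<in>A. bad a)"
    unfolding A_def bad_def TC_graph_weight_minus_TC by blast
  then have "measure_pmf.prob (random_graph n Pn)
      {X. \<exists>T. is_hc_tree n T \<and> dev_scale n \<le> \<bar>TC (graph_weight X) n T - TC Pn n T\<bar>}
      \<le> (\<Sum>a\<in>A. measure_pmf.prob (random_graph n Pn) (bad a))"
    by (intro order_trans[OF measure_pmf.finite_measure_mono
          measure_pmf.finite_measure_subadditive_finite[OF count(1)]]) auto
  also have "\<dots> \<le> real (card A) * K"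
  proof (rule sum_bounded_above)
    fix a assume "a \<in> A"
    then obtain T where "a = tc_coeff n T" unfolding A_def by blast
    moreover have "dev_scale n > 0" using dev_scale_pos n by simp
    ultimately show "measure_pmf.prob (random_graph n Pn) (bad a) \<le> K"
      unfolding bad_def K_def using range
      by (intro prob_random_graph_deviation_le) (auto simp: tc_coeff_nonneg tc_coeff_le vertex_pairs_def)
  qed
  also have "\<dots> \<le> real (n ^ n * ((n + 1)\<^sup>2) ^ (2 * n)) * K"
    unfolding K_def by (intro mult_right_mono) (use count(2) in \<open>simp only: of_nat_le_iff\<close>, simp)
  also have "\<dots> < 1 / real n"
  proof -
    have "(0, 1) \<in> vertex_pairs n" using n by (simp add: vertex_pairs_def)
    then have "0 < card (vertex_pairs n)" using finite_vertex_pairs card_gt_0_iff by blast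
    moreover have "real (card (vertex_pairs n)) \<le> (real n)\<^sup>2"
      using card_vertex_pairs_le by (metis of_nat_le_iff of_nat_power)
    ultimately show ?thesis unfolding K_def by (intro cluster_bound_times_tail_lt n) simp_all
  qed
  finally show ?thesis .
qed

text \<open>When BC(G) = 0 the ratio rho no longer compares costs; this case is excluded because
  the graph would be too sparse to have cost close to TC(P, T) >= BC(P).\<close>
lemma optimal_TC_diff_lt:
  assumes dev: "\<And>T. is_hc_tree n T \<Longrightarrow> \<bar>TC (graph_weight X) n T - TC Pn n T\<bar> < t"
    and nonneg: "\<And>i j. i < j \<Longrightarrow> j < n \<Longrightarrow> 0 \<le> Pn i j"
    and sparse_bound: "3 * real n * real n \<le> t" and BC_large: "2 * t \<le> BC Pn n"
    and opt: "optimal (graph_weight X) n T" and opt_b: "optimal Pn n Tb"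
  shows "\<bar>TC (graph_weight X) n T - TC Pn n Tb\<bar> < t"
proof -
  have T: "is_hc_tree n T" and Tb: "is_hc_tree n Tb" using opt opt_b unfolding optimal_def by auto
  have "t > 0" using dev[OF Tb] by linarith
  then have "BC Pn n > 0" using BC_large by linarith
  then have Tb_le: "TC Pn n Tb \<le> TC Pn n T"
    using opt_b T unfolding optimal_def by (simp add: rho_le_iff_TC_le)
  have BC_le: "BC Pn n \<le> TC Pn n Tb" by (rule BC_le_TC) (rule nonneg)
  have "BC (graph_weight X) n \<noteq> 0"
  proof
    assume "BC (graph_weight X) n = 0"
    then have "TC (graph_weight X) n Tb \<le> 3 * real n * real n" by (rule TC_le_if_BC_graph_weight_eq_0)
    with dev[OF Tb] BC_le BC_large sparse_bound show False by linarith
  qed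
  moreover have "BC (graph_weight X) n \<ge> 0" by (rule BC_nonneg) (simp add: graph_weight_def)
  ultimately have "BC (graph_weight X) n > 0" by linarith
  then have "TC (graph_weight X) n T \<le> TC (graph_weight X) n Tb"
    using opt Tb unfolding optimal_def by (simp add: rho_le_iff_TC_le)
  with dev[OF T] dev[OF Tb] Tb_le show ?thesis by linarith
qed

lemma prob_optimal_TC_close:
  fixes Pn :: "nat \<Rightarrow> nat \<Rightarrow> real"
  assumes n: "n \<ge> 4"
    and range: "\<And>i j. i < n \<Longrightarrow> j < n \<Longrightarrow> 0 \<le> Pn i j \<and> Pn i j \<le> 1"
    and BC_large: "2 * dev_scale n \<le> BC Pn n"
  shows "measure_pmf.prob (random_graph n Pn)
           {E. \<forall>T Tb. optimal (graph_weight E) n T \<longrightarrow> optimal Pn n Tb \<longrightarrow>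
              \<bar>TC (graph_weight E) n T - TC Pn n Tb\<bar> \<le> dev_scale n / BC Pn n * TC Pn n Tb}
         > 1 - real n powr (- 1)"
proof -
  let ?Bad = "{X. \<exists>T. is_hc_tree n T \<and> dev_scale n \<le> \<bar>TC (graph_weight X) n T - TC Pn n T\<bar>}"
  have nonneg: "\<And>i j. i < j \<Longrightarrow> j < n \<Longrightarrow> 0 \<le> Pn i j" using range by force
  have "dev_scale n > 0" using dev_scale_pos n by simp
  then have BC_pos: "BC Pn n > 0" using BC_large by linarith
  have "3 * real n * real n \<le> dev_scale n"
    using dev_scale_ge[of n] n zero_le_square[of "real n"] unfolding power2_eq_square by linarith
  then have "- ?Bad \<subseteq> {E. \<forall>T Tb. optimal (graph_weight E) n T \<longrightarrow> optimal Pn n Tb \<longrightarrow>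
      \<bar>TC (graph_weight E) n T - TC Pn n Tb\<bar> \<le> dev_scale n / BC Pn n * TC Pn n Tb}"
  proof (intro subsetI CollectI allI impI)
    fix X T Tb assume X: "X \<in> - ?Bad" and sparse_bound: "3 * real n * real n \<le> dev_scale n"
      and opt: "optimal (graph_weight X) n T" "optimal Pn n Tb"
    have "\<And>T. is_hc_tree n T \<Longrightarrow> \<bar>TC (graph_weight X) n T - TC Pn n T\<bar> < dev_scale n"
      using X by (auto simp: not_le)
    then have "\<bar>TC (graph_weight X) n T - TC Pn n Tb\<bar> < dev_scale n"
      using optimal_TC_diff_lt[OF _ nonneg sparse_bound BC_large opt] by blast
    moreover have "dev_scale n \<le> dev_scale n / BC Pn n * TC Pn n Tb"
      using BC_le_TC[OF nonneg, where T = Tb] BC_pos \<open>dev_scale n > 0\<close> by (simp add: field_simps)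
    ultimately show "\<bar>TC (graph_weight X) n T - TC Pn n Tb\<bar> \<le> dev_scale n / BC Pn n * TC Pn n Tb"
      by linarith
  qed
  then have "measure_pmf.prob (random_graph n Pn) (- ?Bad) \<le> measure_pmf.prob (random_graph n Pn)
      {E. \<forall>T Tb. optimal (graph_weight E) n T \<longrightarrow> optimal Pn n Tb \<longrightarrow>
         \<bar>TC (graph_weight E) n T - TC Pn n Tb\<bar> \<le> dev_scale n / BC Pn n * TC Pn n Tb}"
    by (rule measure_pmf.finite_measure_mono) simp
  moreover have "measure_pmf.prob (random_graph n Pn) (- ?Bad) = 1 - measure_pmf.prob (random_graph n Pn) ?Bad"
    using measure_pmf.prob_compl[of ?Bad "random_graph n Pn"] by (simp add: Compl_eq_Diff_UNIV)
  moreover have "real n powr (- 1) = 1 / real n" using n by (simp add: powr_neg_one)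
  ultimately show ?thesis using prob_some_tree_deviates_lt[where Pn = Pn, OF n range] by linarith
qed

lemma eventually_dense_BC_ge:
  fixes P :: "nat \<Rightarrow> nat \<Rightarrow> nat \<Rightarrow> real"
  assumes dense: "\<forall>\<^sub>F n in sequentially.
                  \<forall>i<n. \<forall>j<n. i \<noteq> j \<longrightarrow> c * sqrt (ln (real n) / real n) \<le> P n i j"
    and c: "c \<ge> 0"
  shows "\<forall>\<^sub>F n in sequentially. c * dev_scale n / 1296 \<le> BC (P n) n"
  using dense eventually_ge_at_top[of 4]
proof eventually_elim
  case (elim n)
  then show ?case by (intro dense_BC_ge c) auto
qed

lemma dev_scale_div_BC_tendsto_0:
  fixes P :: "nat \<Rightarrow> nat \<Rightarrow> nat \<Rightarrow> real"
  assumes dense: "\<And>c. c > 0 \<Longrightarrow> \<forall>\<^sub>F n in sequentially.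
                  \<forall>i<n. \<forall>j<n. i \<noteq> j \<longrightarrow> c * sqrt (ln (real n) / real n) \<le> P n i j"
  shows "(\<lambda>n. dev_scale n / BC (P n) n) \<longlonglongrightarrow> 0"
proof (rule tendstoI)
  fix e :: real assume e: "e > 0"
  have "\<forall>\<^sub>F n in sequentially. 2592 / e * dev_scale n / 1296 \<le> BC (P n) n"
    using e by (intro eventually_dense_BC_ge dense) simp_all
  with eventually_ge_at_top[of 4]
  show "\<forall>\<^sub>F n in sequentially. dist (dev_scale n / BC (P n) n) 0 < e"
  proof eventually_elim
    case (elim n)
    then have d: "0 < dev_scale n" using dev_scale_pos by simp
    with elim e have BC: "2 * dev_scale n / e \<le> BC (P n) n" by simp
    moreover have "0 < 2 * dev_scale n / e" using d e by simp
    ultimately have "0 < BC (P n) n" by linarith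
    then have pos: "0 < dev_scale n / BC (P n) n" using d by simp
    from \<open>0 < BC (P n) n\<close> BC e have "dev_scale n / BC (P n) n \<le> e / 2"
      by (simp add: field_simps)
    with pos e show ?case unfolding dist_real_def by (simp only: diff_zero abs_of_pos)
  qed
qed

theorem proposition3:
  fixes P :: "nat \<Rightarrow> nat \<Rightarrow> nat \<Rightarrow> real"
  assumes sym: "\<And>n i j. i < n \<Longrightarrow> j < n \<Longrightarrow> P n i j = P n j i"
    and range: "\<And>n i j. i < n \<Longrightarrow> j < n \<Longrightarrow> 0 \<le> P n i j \<and> P n i j \<le> 1"
    and dense: "\<And>c. c > 0 \<Longrightarrow> \<forall>\<^sub>F n in sequentially.
                  \<forall>i<n. \<forall>j<n. i \<noteq> j \<longrightarrow> c * sqrt (ln (real n) / real n) \<le> P n i j"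
  shows "\<exists>\<epsilon>>0. \<exists>f :: nat \<Rightarrow> real. f \<longlonglongrightarrow> 0 \<and>
           (\<forall>\<^sub>F n in sequentially.
              measure_pmf.prob (random_graph n (P n))
                {E. \<forall>T Tb. optimal (graph_weight E) n T \<longrightarrow> optimal (P n) n Tb \<longrightarrow>
                      \<bar>TC (graph_weight E) n T - TC (P n) n Tb\<bar> \<le> f n * TC (P n) n Tb}
              > 1 - real n powr (- \<epsilon>))"
proof -
  have "\<forall>\<^sub>F n in sequentially. 2592 * dev_scale n / 1296 \<le> BC (P n) n"
    by (intro eventually_dense_BC_ge dense) simp_all
  with eventually_ge_at_top[of 4]
  have "\<forall>\<^sub>F n in sequentially.
          measure_pmf.prob (random_graph n (P n))
            {E. \<forall>T Tb. optimal (graph_weight E) n T \<longrightarrow> optimal (P n) n Tb \<longrightarrow>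
               \<bar>TC (graph_weight E) n T - TC (P n) n Tb\<bar> \<le> dev_scale n / BC (P n) n * TC (P n) n Tb}
          > 1 - real n powr (- 1)"
  proof eventually_elim
    case (elim n)
    then show ?case by (intro prob_optimal_TC_close range) auto
  qed
  then show ?thesis
    using dev_scale_div_BC_tendsto_0[OF dense] by (intro exI[of _ 1] exI[of _ "\<lambda>n. dev_scale n / BC (P n) n"]) auto
qed

end
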